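(* Let $0<q<1$ and $s\in\mathbb{C}$, and regard all operators as acting on $\mathbb{C}[x]$. (i) For every $n\ge1$, $$H_n(x,s|q)=\big(x-s\,q^{n-2}D_x^q\big)\circ\big(x-s\,q^{n-3}D_x^q\big)\circ\cdots\circ\big(x-s\,q^{-1}D_x^q\big)(1),$$ i.e. $H_n(x,s|q)=\prod_{k=1}^n\big(x-s\,q^{n-1-k}D_x^q\big)\cdot(1)$ with the factor $k=1$ leftmost, where $x$ denotes multiplication by $x$. (ii) Let $A$ be the linear operator on $\mathbb{C}[x]$ given by $A f(x)=x f(x)+s\,(D_x^qf)(qx)$, so that $A\,x^m=x^{m+1}+s\,q^{m-1}\{m\}_q\,x^{m-1}$ (this is the operator $x+s\,q^N\circ D_x^q$, where $N x^m=m x^m$). Then for every $n\ge0$, $$\sum_{k=0}^{\lfloor n/2\rfloor}\frac{(-1)^kq^{k(k-1)}\{n\}_q!}{\{n-2k\}_q!\,\{2k\}_q!!}\,s^k\,A^{\,n-2k}(1)=x^n,$$ i.e. $H_n(A,s|q)\cdot(1)=x^n$.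
   Context: For $n\ge0$: $\{n\}_q=\frac{1-q^n}{1-q}$, $\{n\}_q!=\prod_{k=1}^n\{k\}_q$, $\{2n\}_q!!=\prod_{k=1}^n\{2k\}_q$, $\{0\}_q!=\{0\}_q!!=1$. The $q$-Hermite polynomials are $$H_n(x,s|q)=\sum_{k=0}^{\lfloor n/2\rfloor}\frac{(-1)^kq^{k(k-1)}\{n\}_q!}{\{n-2k\}_q!\,\{2k\}_q!!}\,s^kx^{n-2k}.$$ The $q$-derivative is $D_x^qf(x)=\frac{f(x)-f(qx)}{(1-q)x}$ (so $D_x^qx^m=\{m\}_qx^{m-1}$). *)

theory Defs
  imports Complex_Main "HOL-Computational_Algebra.Polynomial"
begin

definition qnum :: "real \<Rightarrow> nat \<Rightarrow> complex" where
  "qnum q n = (1 - complex_of_real q ^ n) / (1 - complex_of_real q)"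

definition qfact :: "real \<Rightarrow> nat \<Rightarrow> complex" where
  "qfact q n = (\<Prod>k=1..n. qnum q k)"

definition qdfact :: "real \<Rightarrow> nat \<Rightarrow> complex" where
  "qdfact q n = (\<Prod>k=1..n. qnum q (2*k))"  \<comment> \<open>{2n}_q!!\<close>

text \<open>q-derivative on C[x]: (f(x) - f(qx)) / ((1-q) x); the division is exact.\<close>
definition qderiv :: "real \<Rightarrow> complex poly \<Rightarrow> complex poly" where
  "qderiv q f = (f - pcompose f [:0, complex_of_real q:]) div [:0, 1 - complex_of_real q:]"

definition qHermite :: "nat \<Rightarrow> complex \<Rightarrow> real \<Rightarrow> complex poly" where
  "qHermite n s q = (\<Sum>k\<le>n div 2.
     monom ((-1)^k * complex_of_real q ^ (k*(k-1)) * qfact q n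
            / (qfact q (n - 2*k) * qdfact q k) * s^k) (n - 2*k))"

definition lowerOp :: "real \<Rightarrow> complex \<Rightarrow> int \<Rightarrow> complex poly \<Rightarrow> complex poly" where
  "lowerOp q s j f = [:0, 1:] * f - smult (s * complex_of_real q powi j) (qderiv q f)"

definition opA :: "real \<Rightarrow> complex \<Rightarrow> complex poly \<Rightarrow> complex poly" where
  "opA q s f = [:0, 1:] * f + smult s (pcompose (qderiv q f) [:0, complex_of_real q:])"

end

theory Submission
  imports Defs
begin

text \<open>
  Let c(n,k) be the coefficient of s^k x^(n-2k) in H_n. Its ratios to c(n,k) when n or both n
  and k increase by one, combined with {n+2} = {n-2k} + q^(n-2k) {2k+2}, give
  c(n+2,k+1) = c(n+1,k+1) - s q^n {n+1} c(n,k). Hence, if x^j is replaced by T^j(1) in H_n for a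
  linear operator T, the resulting polynomials h_n satisfy h_(n+2) = T h_(n+1) - s q^n {n+1} h_n.

  For T = A this recurrence is A x^(n+1) = x^(n+2) + s q^n {n+1} x^n, so h_n = x^n. For T = x
  we get H_n back, and since D_q H_(n+1) = {n+1} H_n the recurrence reads
  H_(n+2) = (x - s q^n D_q) H_(n+1), which unfolds into the operator product of part (i).
\<close>

lemma pcompose_monom_linear:
  fixes a c :: "'a::comm_ring_1"
  shows "pcompose (monom c m) [:0, a:] = monom (c * a ^ m) m"
proof -
  have "[:0, a:] = monom a 1" by (simp add: monom_Suc monom_0)
  then show ?thesis by (auto intro!: poly_eqI simp: coeff_monom)
qed

lemma additive_smult: "additive (smult c)"
  by unfold_locales (rule smult_add_right)

lemma qnum_0 [simp]: "qnum q 0 = 0"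
  by (simp add: qnum_def)

lemma qnum_add: "q \<noteq> 1 \<Longrightarrow> qnum q (m + n) = qnum q m + complex_of_real q ^ m * qnum q n"
  unfolding qnum_def by (simp add: field_simps power_add)

lemma qnum_nonzero:
  assumes "\<bar>q\<bar> \<noteq> 1" and "n \<noteq> 0"
  shows "qnum q n \<noteq> 0"
proof -
  have "q ^ n \<noteq> 1"
    using assms by (metis abs_1 bot_nat_0.extremum le_neq_implies_less real_root_one root_abs_power)
  then have "complex_of_real q ^ n \<noteq> 1"
    by (metis of_real_eq_1_iff of_real_power)
  moreover have "complex_of_real q \<noteq> 1"
    using assms(1) by auto
  ultimately show ?thesis
    by (simp add: qnum_def)
qed

lemma qfact_Suc: "qfact q (Suc n) = qfact q n * qnum q (Suc n)"
  by (simp add: qfact_def)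

lemma qdfact_Suc: "qdfact q (Suc n) = qdfact q n * qnum q (2 * Suc n)"
  by (simp add: qdfact_def)

lemma qfact_nonzero: "\<bar>q\<bar> \<noteq> 1 \<Longrightarrow> qfact q n \<noteq> 0"
  by (induction n) (simp_all add: qfact_def qfact_Suc qnum_nonzero)

lemma qdfact_nonzero: "\<bar>q\<bar> \<noteq> 1 \<Longrightarrow> qdfact q n \<noteq> 0"
  by (induction n) (simp_all add: qdfact_def qdfact_Suc qnum_nonzero)

lemma qderiv_mult_x:
  assumes "q \<noteq> 1"
  shows "[:0, 1 - complex_of_real q:] * qderiv q f = f - pcompose f [:0, complex_of_real q:]"
proof -
  let ?g = "f - pcompose f [:0, complex_of_real q:]"
  have "[:0, 1:] dvd ?g"
    using dvd_iff_poly_eq_0[of 0 ?g] by (simp add: poly_pcompose)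
  moreover have "1 - complex_of_real q \<noteq> 0"
    using assms by simp
  ultimately have "[:0, 1 - complex_of_real q:] dvd ?g"
    by (metis smult_dvd_iff smult_pCons smult_0_right mult_zero_right mult_1_right)
  then show ?thesis
    unfolding qderiv_def by (rule dvd_mult_div_cancel)
qed

lemma qderiv_eqI:
  assumes "q \<noteq> 1" and "[:0, 1 - complex_of_real q:] * g = f - pcompose f [:0, complex_of_real q:]"
  shows "qderiv q f = g"
  using assms unfolding qderiv_def
  by (metis nonzero_mult_div_cancel_left pCons_eq_0_iff right_minus_eq of_real_eq_1_iff)

lemma additive_qderiv:
  assumes "q \<noteq> 1"
  shows "additive (qderiv q)"
  by unfold_locales
    (rule qderiv_eqI[OF assms], simp only: distrib_left qderiv_mult_x[OF assms] pcompose_add,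
      simp add: algebra_simps)

lemma qderiv_smult:
  assumes "q \<noteq> 1"
  shows "qderiv q (smult c f) = smult c (qderiv q f)"
  by (rule qderiv_eqI[OF assms])
    (simp only: mult_smult_right qderiv_mult_x[OF assms] pcompose_smult smult_diff_right)

lemma qderiv_monom:
  assumes "q \<noteq> 1"
  shows "qderiv q (monom c n) = monom (c * qnum q n) (n - 1)"
proof (rule qderiv_eqI[OF assms])
  have x: "[:0, 1 - complex_of_real q:] = monom (1 - complex_of_real q) 1"
    by (simp add: monom_Suc monom_0)
  have "1 - complex_of_real q \<noteq> 0"
    using assms by simp
  then show "[:0, 1 - complex_of_real q:] * monom (c * qnum q n) (n - 1)
      = monom c n - pcompose (monom c n) [:0, complex_of_real q:]"
    by (cases n) (simp_all add: x pcompose_monom_linear mult_monom qnum_def diff_monom field_simps)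
qed

lemma additive_opA: "q \<noteq> 1 \<Longrightarrow> additive (opA q s)"
  by unfold_locales
    (simp add: opA_def additive.add[OF additive_qderiv] pcompose_add smult_add_right algebra_simps)

lemma opA_smult: "q \<noteq> 1 \<Longrightarrow> opA q s (smult c f) = smult c (opA q s f)"
  by (simp add: opA_def qderiv_smult pcompose_smult smult_add_right mult.commute)

lemma opA_monom:
  assumes "q \<noteq> 1"
  shows "opA q s (monom 1 m)
    = monom 1 (Suc m) + monom (s * complex_of_real q ^ (m - 1) * qnum q m) (m - 1)"
  by (simp add: opA_def qderiv_monom[OF assms] pcompose_monom_linear smult_monom monom_Suc
      mult_ac)

definition hermite_coeff :: "real \<Rightarrow> complex \<Rightarrow> nat \<Rightarrow> nat \<Rightarrow> complex" where
  "hermite_coeff q s n k = (if 2 * k \<le> n then (-1)^k * complex_of_real q ^ (k * (k - 1)) * qfact q n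
     / (qfact q (n - 2 * k) * qdfact q k) * s ^ k else 0)"

lemma hermite_coeff_0 [simp]: "\<bar>q\<bar> \<noteq> 1 \<Longrightarrow> hermite_coeff q s n 0 = 1"
  by (simp add: hermite_coeff_def qdfact_def qfact_nonzero)

lemma hermite_coeff_eq_0: "n < 2 * k \<Longrightarrow> hermite_coeff q s n k = 0"
  by (simp add: hermite_coeff_def)

lemma hermite_coeff_Suc_left:
  assumes "\<bar>q\<bar> \<noteq> 1"
  shows "hermite_coeff q s (Suc n) k * qnum q (Suc n - 2 * k) = qnum q (Suc n) * hermite_coeff q s n k"
proof (cases "2 * k \<le> n")
  case True
  then obtain j where "n = 2 * k + j"
    using le_Suc_ex by blast
  then show ?thesis
    using assms by (simp add: hermite_coeff_def Suc_diff_le qfact_Suc qfact_nonzero qdfact_nonzero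
        qnum_nonzero field_simps)
next
  case False
  then show ?thesis
    by (cases "2 * k = Suc n") (simp_all add: hermite_coeff_def)
qed

lemma hermite_coeff_Suc_Suc:
  assumes q: "\<bar>q\<bar> \<noteq> 1"
  shows "hermite_coeff q s (Suc n) (Suc k) * qnum q (2 * Suc k)
    = - s * complex_of_real q ^ (2 * k) * qnum q (Suc n) * qnum q (n - 2 * k) * hermite_coeff q s n k"
proof (cases "2 * k < n")
  case True
  then obtain j where n: "n = Suc (2 * k + j)"
    using less_imp_Suc_add by blast
  then have idx: "Suc n - 2 * Suc k = j" "n - 2 * k = Suc j" "2 * Suc k \<le> Suc n" "2 * k \<le> n"
    by simp_all
  have "Suc k * (Suc k - 1) = k * (k - 1) + 2 * k"
    by (cases k) (simp_all add: algebra_simps)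
  then have pow: "complex_of_real q ^ (Suc k * (Suc k - 1))
      = complex_of_real q ^ (k * (k - 1)) * complex_of_real q ^ (2 * k)"
    by (simp only: power_add)
  have "qfact q j \<noteq> 0" "qdfact q k \<noteq> 0" "qnum q (Suc j) \<noteq> 0" "qnum q (2 * Suc k) \<noteq> 0"
    using q by (simp_all add: qfact_nonzero qdfact_nonzero qnum_nonzero)
  then show ?thesis
    unfolding hermite_coeff_def
    by (simp only: idx if_True pow qfact_Suc qdfact_Suc) (simp add: field_simps)
next
  case False
  then show ?thesis
    by (cases "2 * k = n") (simp_all add: hermite_coeff_def)
qed

lemma hermite_coeff_recurrence:
  assumes q: "\<bar>q\<bar> \<noteq> 1"
  shows "hermite_coeff q s (n + 2) (Suc k)
    = hermite_coeff q s (n + 1) (Suc k) - s * complex_of_real q ^ n * qnum q (n + 1) * hermite_coeff q s n k"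
proof (cases "2 * k \<le> n")
  case True
  let ?c = "hermite_coeff q s" and ?Q = "complex_of_real q"
  have "?c (n + 2) (Suc k) * qnum q (2 * Suc k)
      = - s * ?Q ^ (2 * k) * qnum q (n + 2) * (?c (Suc n) k * qnum q (Suc n - 2 * k))"
    using hermite_coeff_Suc_Suc[OF q, of s "Suc n" k] True by (simp add: Suc_diff_le)
  also have "\<dots> = - s * ?Q ^ (2 * k) * qnum q (n + 2) * qnum q (n + 1) * ?c n k"
    by (simp add: hermite_coeff_Suc_left[OF q])
  finally have c2: "?c (n + 2) (Suc k) * qnum q (2 * Suc k)
      = - s * ?Q ^ (2 * k) * qnum q (n + 2) * qnum q (n + 1) * ?c n k" .
  have c1: "?c (n + 1) (Suc k) * qnum q (2 * Suc k)
      = - s * ?Q ^ (2 * k) * qnum q (n - 2 * k) * qnum q (n + 1) * ?c n k"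
    using hermite_coeff_Suc_Suc[OF q, of s n k] by (simp add: mult_ac)
  have "qnum q (n + 2) = qnum q (n - 2 * k) + ?Q ^ (n - 2 * k) * qnum q (2 * Suc k)"
    using qnum_add[of q "n - 2 * k" "2 * Suc k"] q True by auto
  moreover have "?Q ^ (2 * k) * ?Q ^ (n - 2 * k) = ?Q ^ n"
    using True by (simp flip: power_add)
  ultimately have gap: "?Q ^ (2 * k) * (qnum q (n + 2) - qnum q (n - 2 * k)) = ?Q ^ n * qnum q (2 * Suc k)"
    by (simp add: algebra_simps)
  have "(?c (n + 2) (Suc k) - ?c (n + 1) (Suc k)) * qnum q (2 * Suc k)
      = - s * qnum q (n + 1) * ?c n k * (?Q ^ (2 * k) * (qnum q (n + 2) - qnum q (n - 2 * k)))"
    unfolding left_diff_distrib c1 c2 by (simp only: ring_distribs mult_ac)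
  also have "\<dots> = (- s * ?Q ^ n * qnum q (n + 1) * ?c n k) * qnum q (2 * Suc k)"
    unfolding gap by (simp only: mult_ac)
  finally have scaled: "(?c (n + 2) (Suc k) - ?c (n + 1) (Suc k)) * qnum q (2 * Suc k)
      = (- s * ?Q ^ n * qnum q (n + 1) * ?c n k) * qnum q (2 * Suc k)" .
  have "qnum q (2 * Suc k) \<noteq> 0"
    using q by (simp add: qnum_nonzero)
  then have "?c (n + 2) (Suc k) - ?c (n + 1) (Suc k) = - s * ?Q ^ n * qnum q (n + 1) * ?c n k"
    using scaled by (rule mult_right_cancel[THEN iffD1])
  then show ?thesis
    by (simp add: diff_eq_eq)
next
  case False
  then show ?thesis
    by (simp add: hermite_coeff_eq_0)
qed

lemma sum_hermite_coeff_trunc: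
  assumes "n div 2 \<le> m"
  shows "(\<Sum>k\<le>m. smult (hermite_coeff q s n k) (f k)) = (\<Sum>k\<le>n div 2. smult (hermite_coeff q s n k) (f k))"
  using assms by (intro sum.mono_neutral_right) (auto simp: hermite_coeff_eq_0)

definition hermite_comb :: "real \<Rightarrow> complex \<Rightarrow> (nat \<Rightarrow> complex poly) \<Rightarrow> nat \<Rightarrow> complex poly" where
  "hermite_comb q s P n = (\<Sum>k\<le>n div 2. smult (hermite_coeff q s n k) (P (n - 2 * k)))"

lemma hermite_comb_0 [simp]: "\<bar>q\<bar> \<noteq> 1 \<Longrightarrow> hermite_comb q s P 0 = P 0"
  by (simp add: hermite_comb_def)

lemma hermite_comb_recurrence:
  assumes q: "\<bar>q\<bar> \<noteq> 1"
    and T: "additive T" "\<And>c f. T (smult c f) = smult c (T f)"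
    and P: "\<And>j. P (Suc j) = T (P j)"
  shows "hermite_comb q s P (n + 2)
    = T (hermite_comb q s P (n + 1)) - smult (s * complex_of_real q ^ n * qnum q (n + 1)) (hermite_comb q s P n)"
proof -
  let ?c = "hermite_coeff q s" and ?r = "s * complex_of_real q ^ n * qnum q (n + 1)"
  have "T (hermite_comb q s P (n + 1)) = (\<Sum>k\<le>(n + 1) div 2. smult (?c (n + 1) k) (P (n + 2 - 2 * k)))"
    unfolding hermite_comb_def additive.sum[OF T(1)] T(2)
  proof (intro sum.cong refl)
    fix k
    assume "k \<in> {..(n + 1) div 2}"
    then have "n + 2 - 2 * k = Suc (n + 1 - 2 * k)"
      by auto
    then show "smult (?c (n + 1) k) (T (P (n + 1 - 2 * k))) = smult (?c (n + 1) k) (P (n + 2 - 2 * k))"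
      by (simp only: P)
  qed
  also have "\<dots> = (\<Sum>k\<le>Suc (n div 2). smult (?c (n + 1) k) (P (n + 2 - 2 * k)))"
    by (rule sum_hermite_coeff_trunc[symmetric]) simp
  also have "\<dots> = P (n + 2) + (\<Sum>k\<le>n div 2. smult (?c (n + 1) (Suc k)) (P (n - 2 * k)))"
    by (simp only: sum.atMost_Suc_shift hermite_coeff_0[OF q]) simp
  finally have shifted: "T (hermite_comb q s P (n + 1))
      = P (n + 2) + (\<Sum>k\<le>n div 2. smult (?c (n + 1) (Suc k)) (P (n - 2 * k)))" .
  have "hermite_comb q s P (n + 2) = P (n + 2) + (\<Sum>k\<le>n div 2. smult (?c (n + 2) (Suc k)) (P (n - 2 * k)))"
  proof -
    have "(n + 2) div 2 = Suc (n div 2)"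
      by simp
    then show ?thesis
      unfolding hermite_comb_def by (simp only: sum.atMost_Suc_shift hermite_coeff_0[OF q]) simp
  qed
  also have "\<dots> = P (n + 2) + (\<Sum>k\<le>n div 2. smult (?c (n + 1) (Suc k)) (P (n - 2 * k)))
      - smult ?r (hermite_comb q s P n)"
    unfolding hermite_comb_def hermite_coeff_recurrence[OF q] smult_diff_left sum_subtractf
      additive.sum[OF additive_smult] smult_smult
    by simp
  finally show ?thesis
    unfolding shifted .
qed

lemma hermite_comb_opA_powers:
  assumes q: "\<bar>q\<bar> \<noteq> 1"
  shows "hermite_comb q s (\<lambda>j. (opA q s ^^ j) 1) n = monom 1 n"
proof -
  have q1: "q \<noteq> 1"
    using q by auto
  show ?thesis
  proof (induction n rule: induct_nat_012)
    case 0
    show ?case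
      using q by (simp add: monom_0 one_pCons)
  next
    case 1
    show ?case
      using q opA_monom[OF q1, of s 0] by (simp add: hermite_comb_def monom_0 one_pCons)
  next
    case (ge2 n)
    have "hermite_comb q s (\<lambda>j. (opA q s ^^ j) 1) (n + 2)
        = opA q s (monom 1 (n + 1)) - smult (s * complex_of_real q ^ n * qnum q (n + 1)) (monom 1 n)"
      using hermite_comb_recurrence[OF q additive_opA[OF q1] opA_smult[OF q1]] ge2 by simp
    also have "\<dots> = monom 1 (n + 2)"
      by (simp add: opA_monom[OF q1] smult_monom)
    finally show ?case
      by simp
  qed
qed

lemma qHermite_eq_hermite_comb: "qHermite n s q = hermite_comb q s (monom 1) n"
  unfolding qHermite_def hermite_comb_def
  by (intro sum.cong refl) (auto simp: hermite_coeff_def smult_monom)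

lemma qHermite_recurrence:
  assumes q: "\<bar>q\<bar> \<noteq> 1"
  shows "qHermite (n + 2) s q
    = [:0, 1:] * qHermite (n + 1) s q - smult (s * complex_of_real q ^ n * qnum q (n + 1)) (qHermite n s q)"
  unfolding qHermite_eq_hermite_comb
  by (rule hermite_comb_recurrence[OF q])
    (simp_all add: additive_def distrib_left mult_smult_right monom_Suc)

lemma qderiv_qHermite:
  assumes q: "\<bar>q\<bar> \<noteq> 1"
  shows "qderiv q (qHermite (Suc n) s q) = smult (qnum q (Suc n)) (qHermite n s q)"
proof -
  let ?c = "hermite_coeff q s"
  have q1: "q \<noteq> 1"
    using q by auto
  have "qderiv q (qHermite (Suc n) s q)
      = (\<Sum>k\<le>Suc n div 2. qderiv q (smult (?c (Suc n) k) (monom 1 (Suc n - 2 * k))))"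
    unfolding qHermite_eq_hermite_comb hermite_comb_def by (rule additive.sum[OF additive_qderiv[OF q1]])
  also have "\<dots> = (\<Sum>k\<le>Suc n div 2. smult (?c (Suc n) k * qnum q (Suc n - 2 * k)) (monom 1 (n - 2 * k)))"
    by (intro sum.cong refl) (simp add: qderiv_smult[OF q1] qderiv_monom[OF q1] smult_monom)
  also have "\<dots> = (\<Sum>k\<le>Suc n div 2. smult (qnum q (Suc n)) (smult (?c n k) (monom 1 (n - 2 * k))))"
    by (intro sum.cong refl) (simp only: hermite_coeff_Suc_left[OF q] smult_smult)
  also have "\<dots> = smult (qnum q (Suc n)) (\<Sum>k\<le>Suc n div 2. smult (?c n k) (monom 1 (n - 2 * k)))"
    by (rule additive.sum[OF additive_smult, symmetric])
  also have "\<dots> = smult (qnum q (Suc n)) (\<Sum>k\<le>n div 2. smult (?c n k) (monom 1 (n - 2 * k)))"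
    by (subst sum_hermite_coeff_trunc) auto
  finally show ?thesis
    by (simp only: qHermite_eq_hermite_comb hermite_comb_def)
qed

lemma qHermite_Suc_eq_lowerOp:
  assumes q: "\<bar>q\<bar> \<noteq> 1"
  shows "qHermite (Suc n) s q = lowerOp q s (int n - 1) (qHermite n s q)"
proof (cases n)
  case 0
  have "qderiv q [:1:] = 0"
    using qderiv_monom[of q 1 0] q by (auto simp: monom_0)
  then show ?thesis
    using q by (simp add: 0 lowerOp_def qHermite_eq_hermite_comb hermite_comb_def monom_Suc monom_0)
next
  case (Suc m)
  then show ?thesis
    using qHermite_recurrence[OF q, of m s] qderiv_qHermite[OF q, of m s]
    by (simp add: lowerOp_def mult.assoc)
qed

lemma foldr_upt_Suc_shift:
  "foldr (\<lambda>k. F (m - int k)) [1..<n + 2] x = F (m - 1) (foldr (\<lambda>k. F (m - 1 - int k)) [1..<n + 1] x)"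
proof -
  have "[1..<n + 2] = 1 # map Suc [1..<n + 1]"
    by (simp add: map_Suc_upt upt_conv_Cons)
  moreover have "(\<lambda>k. F (m - int k)) \<circ> Suc = (\<lambda>k. F (m - 1 - int k))"
    by (simp add: fun_eq_iff algebra_simps)
  ultimately show ?thesis
    by (simp add: foldr_map)
qed

lemma qHermite_eq_foldr_lowerOp:
  assumes q: "\<bar>q\<bar> \<noteq> 1"
  shows "qHermite n s q = foldr (\<lambda>k. lowerOp q s (int n - 1 - int k)) [1..<n + 1] 1"
proof (induction n)
  case 0
  show ?case
    using q by (simp add: qHermite_eq_hermite_comb monom_0 one_pCons)
next
  case (Suc n)
  have "int (Suc n) - 1 - 1 = int n - 1"
    by simp
  then show ?case
    using foldr_upt_Suc_shift[of "\<lambda>j. lowerOp q s j" "int (Suc n) - 1" n 1]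
    by (simp add: Suc qHermite_Suc_eq_lowerOp[OF q])
qed

theorem mainTheorem7:
  fixes q :: real and s :: complex
  assumes "0 < q" and "q < 1"
  shows "(\<forall>n\<ge>1. qHermite n s q =
            foldr (\<lambda>k f. lowerOp q s (int n - 1 - int k) f) [1..<n+1] 1)
       \<and> (\<forall>n. (\<Sum>k\<le>n div 2.
              smult ((-1)^k * complex_of_real q ^ (k*(k-1)) * qfact q n
                     / (qfact q (n - 2*k) * qdfact q k) * s^k)
                    ((opA q s ^^ (n - 2*k)) 1)) = monom 1 n)"
proof -
  have q: "\<bar>q\<bar> \<noteq> 1"
    using assms by simp
  have "(\<Sum>k\<le>n div 2. smult ((-1)^k * complex_of_real q ^ (k*(k-1)) * qfact q n
      / (qfact q (n - 2*k) * qdfact q k) * s^k) ((opA q s ^^ (n - 2*k)) 1))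
    = hermite_comb q s (\<lambda>j. (opA q s ^^ j) 1) n" for n
    unfolding hermite_comb_def by (intro sum.cong refl) (auto simp: hermite_coeff_def)
  then show ?thesis
    using qHermite_eq_foldr_lowerOp[OF q] hermite_comb_opA_powers[OF q] by simp
qed

end
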